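(* Let $\lambda>0$, let $G=(V,W)$ be a weighted graph with $N$ vertices, let $R\ge 1$, and let $C\subset\mathbb{M}_{N\times R}(\mathbb{R})$ be a nonempty closed convex set. Let $F^k=[f^k_1,\dots,f^k_R]\in C$, and assume $B^k_r:=B(f^k_r)\neq 0$ for all $r$. Set $E^k_r=T(f^k_r)/B^k_r$, let $\Delta^k>0$, and define $c^k_r=\Delta^k/B^k_r$, $d^k_r=\Delta^k E^k_r/B^k_r$, and the convex functions on $\mathbb{M}_{N\times R}(\mathbb{R})$ $$\mathcal{T}^k(F)=\sum_{r=1}^R c^k_r\,T(f_r),\qquad \mathcal{B}^k(F)=\sum_{r=1}^R d^k_r\,B(f_r),\qquad F=[f_1,\dots,f_R].$$ Let $V^k\in\partial\mathcal{B}^k(F^k)$ and define $$F^{k+1}=\operatorname*{argmin}_{F\in C}\ \mathcal{T}^k(F)+\tfrac12\|F-(F^k+V^k)\|_F^2 .$$ Then $F^{k+1}\in C$, and if moreover $B^{k+1}_r:=B(f^{k+1}_r)\neq0$ for all $r$ (so that $E^{k+1}_r:=T(f^{k+1}_r)/B^{k+1}_r$ is defined), then $$\sum_{r=1}^R\frac{B^{k+1}_r}{B^k_r}\bigl(E^k_r-E^{k+1}_r\bigr)\ \ge\ \frac{\|F^k-F^{k+1}\|_F^2}{\Delta^k}.$$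
   Context: The graph $G=(V,W)$ has vertex set $V=\{\mathbf{x}_1,\dots,\mathbf{x}_N\}$ and symmetric matrix $W=(w_{ij})$ with $w_{ij}\ge0$; functions on $V$ are identified with vectors in $\mathbb{R}^N$, $\mathbf{1}$ is the all-ones vector, and $\|\cdot\|_F$ is the Frobenius norm, with $\langle\cdot,\cdot\rangle$ the Frobenius inner product. - $T(f)=\|f\|_{TV}=\sum_{i=1}^N\sum_{j=1}^N w_{ij}|f(\mathbf{x}_i)-f(\mathbf{x}_j)|$. - $B(f)=\|f-\mathrm{med}_\lambda(f)\mathbf{1}\|_{1,\lambda}$, where $\|h\|_{1,\lambda}=\sum_i|h_i|_\lambda$ with $|t|_\lambda=\lambda t$ for $t\ge0$ and $|t|_\lambda=-t$ for $t<0$, and $\mathrm{med}_\lambda(f)$ is the $(k+1)$-st largest entry of $f$ counted with multiplicity, $k=\lfloor N/(\lambda+1)\rfloor$. - $T$ and $B$ are convex and nonnegative, so $c^k_r,d^k_r\ge0$ and $\mathcal{T}^k,\mathcal{B}^k$ are convex; $\partial$ denotes the convex subdifferential. The minimizer defining $F^{k+1}$ exists and is unique by strong convexity (it is the proximal operator of $\mathcal{T}^k+\delta_C$ applied to $F^k+V^k$, where $\delta_C$ is $0$ on $C$ and $+\infty$ off $C$). - In the paper, $C$ is either the simplex set $\Sigma=\{F\in\mathbb{M}_{N\times R}([0,1]): \sum_{r}f_r(\mathbf{x}_i)=1\ \forall i\}$ or its intersection with a label constraint set, but the result only uses that $C$ is nonempty, closed and convex. *)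

theory Defs
  imports "HOL-Analysis.Analysis" "HOL-Library.Multiset"
begin

text \<open>Vertices are indexed by a finite type 'n (N = CARD('n)); labels by a finite
type 'r (R = CARD('r) \<ge> 1). A function on V is a vector real^'n; an N x R matrix is
real^'r^'n, whose norm is the Frobenius norm and whose inner product is the
Frobenius inner product.\<close>

definition column :: "real^'r^'n \<Rightarrow> 'r \<Rightarrow> real^'n" where
  "column F r = (\<chi> i. F $ i $ r)"

definition TV :: "real^'n^'n \<Rightarrow> real^'n \<Rightarrow> real" where
  "TV W f = (\<Sum>i\<in>UNIV. \<Sum>j\<in>UNIV. W $ i $ j * \<bar>f $ i - f $ j\<bar>)"

definition abs_lam :: "real \<Rightarrow> real \<Rightarrow> real" where
  "abs_lam lam t = (if t \<ge> 0 then lam * t else - t)"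

text \<open>(k+1)-st largest entry counted with multiplicity, k = floor(N/(lam+1)).\<close>
definition med_lam :: "real \<Rightarrow> real^'n \<Rightarrow> real" where
  "med_lam lam f =
     rev (sorted_list_of_multiset (image_mset (\<lambda>i. f $ i) (mset_set (UNIV :: 'n set))))
       ! nat \<lfloor>real CARD('n) / (lam + 1)\<rfloor>"

definition Bal :: "real \<Rightarrow> real^'n \<Rightarrow> real" where
  "Bal lam f = (\<Sum>i\<in>UNIV. abs_lam lam (f $ i - med_lam lam f))"

definition subdiff :: "('a::real_inner \<Rightarrow> real) \<Rightarrow> 'a \<Rightarrow> 'a set" where
  "subdiff g x = {v. \<forall>y. g y \<ge> g x + inner v (y - x)}"

end

theory Submission
  imports Defs
begin

text \<open>Write \<open>F'\<close> for the proximal point. Since \<open>T\<^sup>k\<close> is convex, minimality of \<open>F'\<close> on the convex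
  set \<open>C\<close> gives the variational inequality
  \<open>\<langle>F\<^sup>k + V\<^sup>k - F', F\<^sup>k - F'\<rangle> \<le> T\<^sup>k(F\<^sup>k) - T\<^sup>k(F')\<close>, and adding the subgradient
  inequality \<open>B\<^sup>k(F') \<ge> B\<^sup>k(F\<^sup>k) + \<langle>V\<^sup>k, F' - F\<^sup>k\<rangle>\<close> yields
  \<open>\<parallel>F\<^sup>k - F'\<parallel>\<^sup>2 \<le> T\<^sup>k(F\<^sup>k) - T\<^sup>k(F') + B\<^sup>k(F') - B\<^sup>k(F\<^sup>k)\<close>.
  The weights \<open>c\<^sub>r, d\<^sub>r\<close> are chosen so that \<open>T\<^sup>k(F\<^sup>k) = B\<^sup>k(F\<^sup>k)\<close>, and
  \<open>B\<^sup>k(F') - T\<^sup>k(F')\<close> is exactly \<open>\<Delta>\<^sup>k\<close> times the left-hand side of the claim.\<close>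

lemma arg_min_on_minimizes:
  fixes f :: "'a \<Rightarrow> 'b::linorder"
  assumes "x \<in> S" and "\<forall>y\<in>S. f x \<le> f y"
  shows "arg_min_on f S \<in> S \<and> (\<forall>y\<in>S. f (arg_min_on f S) \<le> f y)"
  unfolding arg_min_on_def
  by (rule arg_minI[where x = x]) (use assms in \<open>auto simp: not_less\<close>)

lemma continuous_attains_inf_bounded_sublevel:
  fixes f :: "'a::heine_borel \<Rightarrow> real"
  assumes "closed S" and "a \<in> S" and "continuous_on UNIV f"
    and "bounded {y. f y \<le> f a}"
  shows "\<exists>x\<in>S. \<forall>y\<in>S. f x \<le> f y"
proof -
  let ?K = "S \<inter> {y. f y \<le> f a}"
  have "closed {y. f y \<le> f a}"
    using assms(3) by (intro closed_Collect_le continuous_intros) auto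
  then have "compact ?K"
    using assms(1,4) by (simp add: compact_eq_bounded_closed bounded_Int closed_Int)
  moreover have "?K \<noteq> {}" using assms(2) by blast
  ultimately obtain x where x: "x \<in> ?K" and x_min: "\<forall>y\<in>?K. f x \<le> f y"
    using continuous_attains_inf continuous_on_subset[OF assms(3)] by (metis subset_UNIV)
  have "f x \<le> f y" if "y \<in> S" for y
  proof (cases "f y \<le> f a")
    case True
    then show ?thesis using that x_min by blast
  next
    case False
    then show ?thesis using x by simp
  qed
  then show ?thesis using x by blast
qed

lemma bounded_sublevel_quadratic_growth:
  fixes f :: "'a::real_normed_vector \<Rightarrow> real"
  assumes "\<And>y. (1/2) * (norm (y - p))\<^sup>2 \<le> f y"
  shows "bounded {y. f y \<le> c}"
proof (rule bounded_subset[OF bounded_cball])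
  show "{y. f y \<le> c} \<subseteq> cball p (sqrt (2 * c))"
  proof
    fix y assume "y \<in> {y. f y \<le> c}"
    then have "(norm (y - p))\<^sup>2 \<le> 2 * c" using assms[of y] by simp
    then show "y \<in> cball p (sqrt (2 * c))"
      using real_le_rsqrt by (simp add: dist_norm norm_minus_commute)
  qed
qed

lemma arg_min_on_prox:
  fixes g :: "'a::euclidean_space \<Rightarrow> real" and p :: 'a
  assumes "closed C" and "a \<in> C" and "continuous_on UNIV g" and "\<And>x. 0 \<le> g x"
  defines "x1 \<equiv> arg_min_on (\<lambda>x. g x + (1/2) * (norm (x - p))\<^sup>2) C"
  shows "x1 \<in> C" and "\<And>y. y \<in> C \<Longrightarrow> g x1 + (1/2) * (norm (x1 - p))\<^sup>2 \<le> g y + (1/2) * (norm (y - p))\<^sup>2"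
proof -
  have "\<exists>x\<in>C. \<forall>y\<in>C. g x + (1/2) * (norm (x - p))\<^sup>2 \<le> g y + (1/2) * (norm (y - p))\<^sup>2"
    using assms(4)
    by (intro continuous_attains_inf_bounded_sublevel[OF assms(1,2)]
        bounded_sublevel_quadratic_growth[where p = p])
       (auto intro!: continuous_intros assms(3))
  then show "x1 \<in> C" and "\<And>y. y \<in> C \<Longrightarrow> g x1 + (1/2) * (norm (x1 - p))\<^sup>2 \<le> g y + (1/2) * (norm (y - p))\<^sup>2"
    unfolding x1_def using arg_min_on_minimizes by (metis (no_types, lifting))+
qed

lemma sum_ratio_change_eq:
  fixes b b' t t' :: "'i \<Rightarrow> real"
  assumes "\<And>r. b r \<noteq> 0" and "\<And>r. b' r \<noteq> 0"
  shows "Delta * (\<Sum>r\<in>I. (b' r / b r) * (t r / b r - t' r / b' r))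
    = (\<Sum>r\<in>I. (Delta * (t r / b r) / b r) * b' r) - (\<Sum>r\<in>I. (Delta / b r) * t' r)"
  unfolding sum_distrib_left sum_subtractf[symmetric]
  using assms by (intro sum.cong) (auto simp: field_simps)

lemma prox_variational_inequality:
  fixes g :: "'a::real_inner \<Rightarrow> real"
  assumes "convex_on C g" and "x \<in> C" and "y \<in> C"
    and x_min: "\<And>z. z \<in> C \<Longrightarrow> g x + (1/2) * (norm (x - p))\<^sup>2 \<le> g z + (1/2) * (norm (z - p))\<^sup>2"
  shows "inner (p - x) (y - x) \<le> g y - g x"
proof -
  define d where "d = y - x"
  define X where "X = g y - g x - inner (p - x) d"
  have "0 \<le> X + t / 2 * (norm d)\<^sup>2" if t: "0 < t" "t \<le> 1" for t
  proof -
    have xt: "x + t *\<^sub>R d = (1 - t) *\<^sub>R x + t *\<^sub>R y" by (simp add: d_def algebra_simps)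
    have "x + t *\<^sub>R d \<in> C"
      unfolding xt using convex_on_imp_convex[OF assms(1)] assms(2,3) t
      by (simp add: convexD)
    from x_min[OF this]
    have "g x + (1/2) * (norm (x - p))\<^sup>2 \<le> g (x + t *\<^sub>R d) + (1/2) * (norm ((x - p) + t *\<^sub>R d))\<^sup>2"
      by (simp add: algebra_simps)
    also have "g (x + t *\<^sub>R d) \<le> (1 - t) * g x + t * g y"
      unfolding xt using convex_onD[OF assms(1)] assms(2,3) t by simp
    also have "(norm ((x - p) + t *\<^sub>R d))\<^sup>2
        = (norm (x - p))\<^sup>2 - 2 * t * inner (p - x) d + t\<^sup>2 * (norm d)\<^sup>2"
      unfolding power2_norm_eq_inner
      by (simp add: inner_add inner_diff inner_commute power2_eq_square algebra_simps)
    finally have "0 \<le> t * (X + t / 2 * (norm d)\<^sup>2)"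
      by (simp add: X_def power2_eq_square algebra_simps)
    then show ?thesis using t by (simp add: zero_le_mult_iff)
  qed
  moreover have "((\<lambda>t. X + t / 2 * (norm d)\<^sup>2) \<longlongrightarrow> X) (at_right 0)"
    by (auto intro!: tendsto_eq_intros)
  ultimately have "0 \<le> X"
    by (intro tendsto_lowerbound[where F = "at_right 0"])
       (auto intro: eventually_mono[OF eventually_at_right_real[of 0 1]])
  then show ?thesis by (simp add: X_def d_def)
qed

lemma prox_step_descent:
  fixes g h :: "'a::real_inner \<Rightarrow> real"
  assumes "convex_on C g" and "x0 \<in> C" and "x1 \<in> C"
    and "\<And>z. z \<in> C \<Longrightarrow> g x1 + (1/2) * (norm (x1 - (x0 + v)))\<^sup>2 \<le> g z + (1/2) * (norm (z - (x0 + v)))\<^sup>2"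
    and "v \<in> subdiff h x0"
  shows "(norm (x0 - x1))\<^sup>2 \<le> g x0 - g x1 + h x1 - h x0"
proof -
  have "inner (x0 + v - x1) (x0 - x1) \<le> g x0 - g x1"
    by (rule prox_variational_inequality[OF assms(1,3,2,4)])
  moreover have "inner (x0 + v - x1) (x0 - x1) = (norm (x0 - x1))\<^sup>2 - inner v (x1 - x0)"
    by (simp add: power2_norm_eq_inner inner_diff inner_add inner_commute algebra_simps)
  moreover have "h x0 + inner v (x1 - x0) \<le> h x1"
    using assms(5) by (simp add: subdiff_def)
  ultimately show ?thesis by linarith
qed

lemma convex_on_sum_functions:
  fixes f :: "'i \<Rightarrow> 'a::real_vector \<Rightarrow> real"
  assumes "finite I" and "convex S" and "\<And>i. i \<in> I \<Longrightarrow> convex_on S (f i)"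
  shows "convex_on S (\<lambda>x. \<Sum>i\<in>I. f i x)"
  using assms by (induction I rule: finite_induct) (auto simp: convex_on_const)

lemma column_add: "column (A + B) r = column A r + column B r"
  by (simp add: column_def vec_eq_iff)

lemma column_scaleR: "column (t *\<^sub>R A) r = t *\<^sub>R column A r"
  by (simp add: column_def vec_eq_iff)

lemma continuous_on_TV_column: "continuous_on UNIV (\<lambda>F::real^'r^'n. TV W (column F r))"
  unfolding TV_def column_def by (simp, intro continuous_intros)

lemma TV_nonneg: "\<forall>i j. W $ i $ j \<ge> 0 \<Longrightarrow> TV W f \<ge> 0"
  unfolding TV_def by (intro sum_nonneg) auto

lemma Bal_nonneg: "lam > 0 \<Longrightarrow> Bal lam f \<ge> 0"
  unfolding Bal_def abs_lam_def by (intro sum_nonneg) auto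

lemma convex_on_TV:
  fixes W :: "real^'n^'n"
  assumes "\<forall>i j. W $ i $ j \<ge> 0"
  shows "convex_on UNIV (TV W)"
proof (rule convex_onI)
  fix t :: real and f g :: "real^'n"
  assume t: "0 < t" "t < 1"
  let ?h = "(1 - t) *\<^sub>R f + t *\<^sub>R g"
  have "W $ i $ j * \<bar>?h $ i - ?h $ j\<bar>
      \<le> (1 - t) * (W $ i $ j * \<bar>f $ i - f $ j\<bar>) + t * (W $ i $ j * \<bar>g $ i - g $ j\<bar>)" for i j :: 'n
  proof -
    have "\<bar>?h $ i - ?h $ j\<bar> = \<bar>(1 - t) * (f $ i - f $ j) + t * (g $ i - g $ j)\<bar>"
      by (simp add: algebra_simps)
    also have "\<dots> \<le> (1 - t) * \<bar>f $ i - f $ j\<bar> + t * \<bar>g $ i - g $ j\<bar>"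
      using abs_triangle_ineq[of "(1 - t) * (f $ i - f $ j)" "t * (g $ i - g $ j)"] t
      by (simp add: abs_mult)
    finally show ?thesis
      using mult_left_mono assms by (fastforce simp: algebra_simps)
  qed
  then show "TV W ?h \<le> (1 - t) * TV W f + t * TV W g"
    unfolding TV_def sum_distrib_left sum.distrib[symmetric] by (intro sum_mono)
qed simp

lemma convex_on_TV_column:
  fixes W :: "real^'n^'n"
  assumes "\<forall>i j. W $ i $ j \<ge> 0"
  shows "convex_on UNIV (\<lambda>F::real^'r^'n. TV W (column F r))"
  using convex_onD[OF convex_on_TV[OF assms]]
  by (intro convex_onI) (simp_all add: column_add column_scaleR)

theorem theorem3:
  fixes lam :: real and W :: "real^'n^'n" and C :: "(real^'r^'n) set"
    and Fk Vk :: "real^'r^'n" and Delta :: real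
  assumes lam_pos: "lam > 0"
    and W_sym: "\<forall>i j. W $ i $ j = W $ j $ i"
    and W_nonneg: "\<forall>i j. W $ i $ j \<ge> 0"
    and C_ne: "C \<noteq> {}" and C_closed: "closed C" and C_convex: "convex C"
    and Fk_in: "Fk \<in> C"
    and Bk_nz: "\<forall>r. Bal lam (column Fk r) \<noteq> 0"
    and Delta_pos: "Delta > 0"
    and Vk_sub: "Vk \<in> subdiff
        (\<lambda>F. \<Sum>r\<in>UNIV. (Delta * (TV W (column Fk r) / Bal lam (column Fk r))
                             / Bal lam (column Fk r)) * Bal lam (column F r)) Fk"
  shows "let Fk1 = arg_min_on
               (\<lambda>F. (\<Sum>r\<in>UNIV. (Delta / Bal lam (column Fk r)) * TV W (column F r))
                     + (1/2) * (norm (F - (Fk + Vk)))\<^sup>2) C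
         in Fk1 \<in> C \<and>
            ((\<forall>r. Bal lam (column Fk1 r) \<noteq> 0) \<longrightarrow>
              (\<Sum>r\<in>UNIV. (Bal lam (column Fk1 r) / Bal lam (column Fk r)) *
                   (TV W (column Fk r) / Bal lam (column Fk r)
                    - TV W (column Fk1 r) / Bal lam (column Fk1 r)))
              \<ge> (norm (Fk - Fk1))\<^sup>2 / Delta)"
proof -
  define TT where "TT = (\<lambda>F::real^'r^'n. \<Sum>r\<in>UNIV. (Delta / Bal lam (column Fk r)) * TV W (column F r))"
  define BB where "BB = (\<lambda>F::real^'r^'n. \<Sum>r\<in>UNIV.
    (Delta * (TV W (column Fk r) / Bal lam (column Fk r)) / Bal lam (column Fk r)) * Bal lam (column F r))"
  define Fk1 where "Fk1 = arg_min_on (\<lambda>F. TT F + (1/2) * (norm (F - (Fk + Vk)))\<^sup>2) C"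
  have Bk_pos: "Bal lam (column Fk r) > 0" for r
    using Bk_nz Bal_nonneg[OF lam_pos] by (metis less_eq_real_def)
  have TT_convex: "convex_on C TT"
    unfolding TT_def using Bk_pos Delta_pos C_convex
    by (intro convex_on_sum_functions convex_on_cmul convex_on_TV_column[THEN convex_on_subset] W_nonneg)
       (auto intro: less_imp_le)
  have "continuous_on UNIV TT"
    unfolding TT_def using Bk_nz by (auto intro!: continuous_intros continuous_on_TV_column)
  moreover have "0 \<le> TT F" for F
    unfolding TT_def using Bk_pos Delta_pos TV_nonneg[OF W_nonneg]
    by (intro sum_nonneg) (simp add: less_imp_le)
  ultimately have Fk1_in: "Fk1 \<in> C"
    and Fk1_min: "\<And>y. y \<in> C \<Longrightarrow> TT Fk1 + (1/2) * (norm (Fk1 - (Fk + Vk)))\<^sup>2 \<le> TT y + (1/2) * (norm (y - (Fk + Vk)))\<^sup>2"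
    unfolding Fk1_def using arg_min_on_prox[OF C_closed Fk_in] by blast+
  have descent: "(norm (Fk - Fk1))\<^sup>2 \<le> TT Fk - TT Fk1 + BB Fk1 - BB Fk"
    using prox_step_descent[OF TT_convex Fk_in Fk1_in Fk1_min Vk_sub[folded BB_def]] .
  have "TT Fk = BB Fk"
    unfolding TT_def BB_def using Bk_nz by (intro sum.cong refl) simp
  have "(norm (Fk - Fk1))\<^sup>2 / Delta \<le> (\<Sum>r\<in>UNIV. (Bal lam (column Fk1 r) / Bal lam (column Fk r)) *
      (TV W (column Fk r) / Bal lam (column Fk r) - TV W (column Fk1 r) / Bal lam (column Fk1 r)))"
    (is "_ \<le> ?S") if "\<forall>r. Bal lam (column Fk1 r) \<noteq> 0"
  proof -
    have "Delta * ?S = BB Fk1 - TT Fk1"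
      unfolding TT_def BB_def using Bk_nz that by (intro sum_ratio_change_eq) auto
    with descent \<open>TT Fk = BB Fk\<close> Delta_pos show ?thesis
      by (simp add: divide_le_eq mult.commute)
  qed
  then show ?thesis
    unfolding Let_def Fk1_def[unfolded TT_def, symmetric] using Fk1_in by blast
qed

end
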